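(* Let $(E\to M,\rho,\langle\cdot,\cdot\rangle,\circ)$ be a Courant algebroid and $(\mathbf I,\mathbf J,\mathbf K)$ an almost hypercomplex structure on $E$. There exists at most one hypercomplex connection $\nabla$ satisfying $\nabla\mathbf I=\nabla\mathbf J=\nabla\mathbf K=0$ and, for all $X,Y\in\Gamma(E)$, $$T(X,Y)=\mathbf ID\langle X,\mathbf IY\rangle+\mathbf JD\langle X,\mathbf JY\rangle+\mathbf KD\langle X,\mathbf KY\rangle.$$
   Context: A Courant algebroid $(E\to M,\rho,\langle\cdot,\cdot\rangle,\circ)$ consists of a real vector bundle $E\to M$ over a smooth manifold, a nondegenerate symmetric fiberwise bilinear pairing $\langle\cdot,\cdot\rangle$ on $E$, a vector bundle map $\rho:E\to TM$ (the anchor), and an $\mathbb R$-bilinear operation $\circ$ on $\Gamma(E)$ (the Dorfman bracket) such that for all $f\in C^\infty(M)$, $x,y,z\in\Gamma(E)$: $x\circ(y\circ z)=(x\circ y)\circ z+y\circ(x\circ z)$; $\rho(x\circ y)=[\rho(x),\rho(y)]$; $x\circ(fy)=(\rho(x)f)y+f(x\circ y)$; $x\circ y+y\circ x=2D\langle x,y\rangle$; $(Df)\circ x=0$; $\rho(x)\langle y,z\rangle=\langle x\circ y,z\rangle+\langle y,x\circ z\rangle$. Here $D:C^\infty(M)\to\Gamma(E)$ is the $\mathbb R$-linear map defined by $\langle Df,x\rangle=\tfrac12\rho(x)f$. The Courant bracket is $[\![x,y]\!]=\tfrac12(x\circ y-y\circ x)$. An almost hypercomplex structure on $E$ is a triple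 $(\mathbf I,\mathbf J,\mathbf K)$ of vector bundle endomorphisms of $E$ over $\mathrm{id}_M$, each orthogonal for $\langle\cdot,\cdot\rangle$, with $\mathbf I^2=\mathbf J^2=\mathbf K^2=\mathbf I\mathbf J\mathbf K=-1$. Given an almost hypercomplex structure, for $f\in C^\infty(M)$ and $X,Y\in\Gamma(E)$ set $\Delta_f(X,Y)=\langle X,Y\rangle Df+\langle\mathbf IX,Y\rangle\mathbf I Df+\langle\mathbf JX,Y\rangle\mathbf JDf+\langle\mathbf KX,Y\rangle\mathbf KDf$. A hypercomplex connection is an $\mathbb R$-bilinear map $\Gamma(E)\times\Gamma(E)\to\Gamma(E)$, $(X,Y)\mapsto\nabla_XY$, with $\nabla_{fX}Y=f\nabla_XY$ and $\nabla_X(fY)=(\rho(X)f)Y+f\nabla_XY-\Delta_f(X,Y)$. Its torsion is $T(X,Y)=\nabla_XY-\nabla_YX-[\![X,Y]\!]$. For an endomorphism $P$ of $E$, $(\nabla_XP)Y:=\nabla_X(PY)-P(\nabla_XY)$, and $\nabla P=0$ means this vanishes for all $X,Y$. *)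

theory Defs
  imports Main "HOL.Real_Vector_Spaces"
begin

text \<open>Algebraic (section-level) model of a Courant algebroid E -> M.
  The type 'r plays the role of the real algebra C^\<infinity>(M) of smooth functions,
  the type 'e the C^\<infinity>(M)-module \<Gamma>(E) of smooth sections, with module action
  smult f x (= f x).  Vector fields on M are identified with derivations of
  C^\<infinity>(M); the anchor is given as rho x f = \<rho>(x) f.
  The bracket of vector fields is the commutator of derivations.\<close>

definition cinf_module ::
  "('r::{comm_ring_1,real_algebra_1} \<Rightarrow> 'e::real_vector \<Rightarrow> 'e) \<Rightarrow> bool" where
  "cinf_module smult \<longleftrightarrow>
     (\<forall>f g x. smult (f + g) x = smult f x + smult g x) \<and>
     (\<forall>f x y. smult f (x + y) = smult f x + smult f y) \<and>
     (\<forall>f g x. smult (f * g) x = smult f (smult g x)) \<and>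
     (\<forall>x. smult 1 x = x) \<and>
     (\<forall>c x. smult (of_real c) x = c *\<^sub>R x)"

definition courant_bracket ::
  "('e::real_vector \<Rightarrow> 'e \<Rightarrow> 'e) \<Rightarrow> 'e \<Rightarrow> 'e \<Rightarrow> 'e" where
  "courant_bracket dorf x y = (1/2) *\<^sub>R (dorf x y - dorf y x)"

definition courant_algebroid ::
  "('r::{comm_ring_1,real_algebra_1} \<Rightarrow> 'e::real_vector \<Rightarrow> 'e) \<Rightarrow>
   ('e \<Rightarrow> 'e \<Rightarrow> 'r) \<Rightarrow> ('e \<Rightarrow> 'r \<Rightarrow> 'r) \<Rightarrow> ('e \<Rightarrow> 'e \<Rightarrow> 'e) \<Rightarrow>
   ('r \<Rightarrow> 'e) \<Rightarrow> bool" where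
  "courant_algebroid smult pair rho dorf D \<longleftrightarrow>
     cinf_module smult \<and>
     \<comment> \<open>pairing: symmetric, C^\<infinity>(M)-bilinear, nondegenerate\<close>
     (\<forall>x y. pair x y = pair y x) \<and>
     (\<forall>x y z. pair (x + y) z = pair x z + pair y z) \<and>
     (\<forall>f x y. pair (smult f x) y = f * pair x y) \<and>
     (\<forall>x. (\<forall>y. pair x y = 0) \<longrightarrow> x = 0) \<and>
     \<comment> \<open>anchor: C^\<infinity>(M)-linear bundle map into vector fields (derivations)\<close>
     (\<forall>x y f. rho (x + y) f = rho x f + rho y f) \<and>
     (\<forall>g x f. rho (smult g x) f = g * rho x f) \<and>
     (\<forall>x f g. rho x (f + g) = rho x f + rho x g) \<and>
     (\<forall>x c f. rho x (of_real c * f) = of_real c * rho x f) \<and>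
     (\<forall>x f g. rho x (f * g) = f * rho x g + g * rho x f) \<and>
     \<comment> \<open>Dorfman bracket is R-bilinear\<close>
     (\<forall>x y z. dorf (x + y) z = dorf x z + dorf y z) \<and>
     (\<forall>x y z. dorf x (y + z) = dorf x y + dorf x z) \<and>
     (\<forall>c x y. dorf (c *\<^sub>R x) y = c *\<^sub>R dorf x y) \<and>
     (\<forall>c x y. dorf x (c *\<^sub>R y) = c *\<^sub>R dorf x y) \<and>
     \<comment> \<open>D defined by <Df,x> = 1/2 rho(x) f\<close>
     (\<forall>f x. pair (D f) x = (1/2) *\<^sub>R rho x f) \<and>
     \<comment> \<open>Courant algebroid axioms\<close>
     (\<forall>x y z. dorf x (dorf y z) = dorf (dorf x y) z + dorf y (dorf x z)) \<and>
     (\<forall>x y f. rho (dorf x y) f = rho x (rho y f) - rho y (rho x f)) \<and>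
     (\<forall>x f y. dorf x (smult f y) = smult (rho x f) y + smult f (dorf x y)) \<and>
     (\<forall>x y. dorf x y + dorf y x = 2 *\<^sub>R D (pair x y)) \<and>
     (\<forall>f x. dorf (D f) x = 0) \<and>
     (\<forall>x y z. rho x (pair y z) = pair (dorf x y) z + pair y (dorf x z))"

definition cinf_linear ::
  "('r::{comm_ring_1,real_algebra_1} \<Rightarrow> 'e::real_vector \<Rightarrow> 'e) \<Rightarrow> ('e \<Rightarrow> 'e) \<Rightarrow> bool" where
  "cinf_linear smult P \<longleftrightarrow>
     (\<forall>x y. P (x + y) = P x + P y) \<and> (\<forall>f x. P (smult f x) = smult f (P x))"

definition almost_hypercomplex ::
  "('r::{comm_ring_1,real_algebra_1} \<Rightarrow> 'e::real_vector \<Rightarrow> 'e) \<Rightarrow> ('e \<Rightarrow> 'e \<Rightarrow> 'r) \<Rightarrow>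
   ('e \<Rightarrow> 'e) \<Rightarrow> ('e \<Rightarrow> 'e) \<Rightarrow> ('e \<Rightarrow> 'e) \<Rightarrow> bool" where
  "almost_hypercomplex smult pair I J K \<longleftrightarrow>
     cinf_linear smult I \<and> cinf_linear smult J \<and> cinf_linear smult K \<and>
     (\<forall>x y. pair (I x) (I y) = pair x y) \<and>
     (\<forall>x y. pair (J x) (J y) = pair x y) \<and>
     (\<forall>x y. pair (K x) (K y) = pair x y) \<and>
     (\<forall>x. I (I x) = - x) \<and> (\<forall>x. J (J x) = - x) \<and> (\<forall>x. K (K x) = - x) \<and>
     (\<forall>x. I (J (K x)) = - x)"

definition Delta ::
  "('r::{comm_ring_1,real_algebra_1} \<Rightarrow> 'e::real_vector \<Rightarrow> 'e) \<Rightarrow> ('e \<Rightarrow> 'e \<Rightarrow> 'r) \<Rightarrow>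
   ('r \<Rightarrow> 'e) \<Rightarrow> ('e \<Rightarrow> 'e) \<Rightarrow> ('e \<Rightarrow> 'e) \<Rightarrow> ('e \<Rightarrow> 'e) \<Rightarrow> 'r \<Rightarrow> 'e \<Rightarrow> 'e \<Rightarrow> 'e" where
  "Delta smult pair D I J K f X Y =
     smult (pair X Y) (D f) + smult (pair (I X) Y) (I (D f)) +
     smult (pair (J X) Y) (J (D f)) + smult (pair (K X) Y) (K (D f))"

definition hypercomplex_connection ::
  "('r::{comm_ring_1,real_algebra_1} \<Rightarrow> 'e::real_vector \<Rightarrow> 'e) \<Rightarrow> ('e \<Rightarrow> 'e \<Rightarrow> 'r) \<Rightarrow>
   ('e \<Rightarrow> 'r \<Rightarrow> 'r) \<Rightarrow> ('r \<Rightarrow> 'e) \<Rightarrow> ('e \<Rightarrow> 'e) \<Rightarrow> ('e \<Rightarrow> 'e) \<Rightarrow> ('e \<Rightarrow> 'e) \<Rightarrow>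
   ('e \<Rightarrow> 'e \<Rightarrow> 'e) \<Rightarrow> bool" where
  "hypercomplex_connection smult pair rho D I J K nabla \<longleftrightarrow>
     (\<forall>X Y Z. nabla (X + Y) Z = nabla X Z + nabla Y Z) \<and>
     (\<forall>X Y Z. nabla X (Y + Z) = nabla X Y + nabla X Z) \<and>
     (\<forall>c X Y. nabla (c *\<^sub>R X) Y = c *\<^sub>R nabla X Y) \<and>
     (\<forall>c X Y. nabla X (c *\<^sub>R Y) = c *\<^sub>R nabla X Y) \<and>
     (\<forall>f X Y. nabla (smult f X) Y = smult f (nabla X Y)) \<and>
     (\<forall>f X Y. nabla X (smult f Y) =
        smult (rho X f) Y + smult f (nabla X Y) - Delta smult pair D I J K f X Y)"

definition torsion ::
  "('e::real_vector \<Rightarrow> 'e \<Rightarrow> 'e) \<Rightarrow> ('e \<Rightarrow> 'e \<Rightarrow> 'e) \<Rightarrow> 'e \<Rightarrow> 'e \<Rightarrow> 'e" where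
  "torsion dorf nabla X Y = nabla X Y - nabla Y X - courant_bracket dorf X Y"

definition parallel :: "('e \<Rightarrow> 'e \<Rightarrow> 'e::real_vector) \<Rightarrow> ('e \<Rightarrow> 'e) \<Rightarrow> bool" where
  "parallel nabla P \<longleftrightarrow> (\<forall>X Y. nabla X (P Y) - P (nabla X Y) = 0)"

end

theory Submission
  imports Defs
begin

(* Let nabla1, nabla2 be two such connections and S = nabla1 - nabla2 their
   difference.  Equal torsion forces S X Y = S Y X, and since both connections
   parallelise I and J, S commutes with I and J in its second argument.  For
   a symmetric S commuting with two anticommuting maps P, Q we get
     S (P X) (Q Y) = Q (P (S X Y))   and   S (P X) (Q Y) = P (Q (S X Y)),
   so P (Q s) = - P (Q s) for s = S X Y; over the reals this gives P (Q s) = 0,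
   hence s = 0 as soon as P Q has trivial kernel.  For (P, Q) = (I, J) we have
   I J = K, which is invertible.  Only the quaternion relations, the parallelism
   and the torsion condition enter. *)

lemma quaternion_IJ_JI:
  fixes I J K :: "'a::ab_group_add \<Rightarrow> 'a"
  assumes "additive I" "additive J"
    and II: "\<And>x. I (I x) = - x" and JJ: "\<And>x. J (J x) = - x"
    and KK: "\<And>x. K (K x) = - x" and IJK: "\<And>x. I (J (K x)) = - x"
  shows "I (J x) = K x" and "J (I x) = - K x"
proof -
  have JK: "J (K y) = I y" for y
  proof -
    have "- J (K y) = I (I (J (K y)))" by (simp add: II)
    also have "\<dots> = - I y" by (simp add: IJK additive.minus[OF \<open>additive I\<close>])
    finally show ?thesis by simp
  qed
  have "I (J x) = - I (J (K (K x)))"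
    by (simp add: KK additive.minus[OF \<open>additive I\<close>] additive.minus[OF \<open>additive J\<close>])
  then show "I (J x) = K x" by (simp add: IJK)
  have "J (I x) = J (J (K x))" by (simp add: JK)
  then show "J (I x) = - K x" by (simp add: JJ)
qed

lemma almost_hypercomplex_facts:
  assumes "almost_hypercomplex smult pair I J K"
  shows "additive I" and "additive J"
    and "\<And>x. I (J x) = - J (I x)"
    and "\<And>x. I (J x) = 0 \<Longrightarrow> x = 0"
proof -
  have "cinf_linear smult I" "cinf_linear smult J" "cinf_linear smult K"
    and II: "\<And>x. I (I x) = - x" and JJ: "\<And>x. J (J x) = - x"
    and KK: "\<And>x. K (K x) = - x" and IJK: "\<And>x. I (J (K x)) = - x"
    using assms unfolding almost_hypercomplex_def by auto
  then show addI: "additive I" and addJ: "additive J"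
    unfolding cinf_linear_def additive_def by auto
  have addK: "additive K"
    using \<open>cinf_linear smult K\<close> unfolding cinf_linear_def additive_def by auto
  note IJ = quaternion_IJ_JI[OF addI addJ II JJ KK IJK]
  show "I (J x) = - J (I x)" for x by (simp add: IJ)
  show "x = 0" if "I (J x) = 0" for x
  proof -
    have "- x = K (K x)" by (simp add: KK)
    also have "\<dots> = 0" using that by (simp add: IJ additive.zero[OF addK])
    finally show ?thesis by simp
  qed
qed

lemma symmetric_commuting_vanishes:
  fixes S :: "'e \<Rightarrow> 'e::real_vector \<Rightarrow> 'e"
  assumes sym: "\<And>X Y. S X Y = S Y X"
    and SP: "\<And>X Y. S X (P Y) = P (S X Y)"
    and SQ: "\<And>X Y. S X (Q Y) = Q (S X Y)"
    and anti: "\<And>x. P (Q x) = - Q (P x)"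
    and kernel: "\<And>x. P (Q x) = 0 \<Longrightarrow> x = 0"
  shows "S X Y = 0"
proof -
  let ?s = "S X Y"
  have "S (P X) (Q Y) = Q (P ?s)" by (metis SP SQ sym)
  moreover have "S (P X) (Q Y) = P (Q ?s)" by (metis SP SQ sym)
  ultimately have "P (Q ?s) = - P (Q ?s)" by (simp add: anti)
  then have "(2::real) *\<^sub>R P (Q ?s) = 0" by (simp add: scaleR_2 eq_neg_iff_add_eq_0)
  then show "?s = 0" by (simp add: kernel)
qed

lemma same_torsion_difference_symmetric:
  assumes "torsion dorf nabla1 X Y = torsion dorf nabla2 X Y"
  shows "nabla1 X Y - nabla2 X Y = nabla1 Y X - nabla2 Y X"
  using assms unfolding torsion_def by (simp add: algebra_simps)

lemma parallel_difference_commutes: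
  assumes "additive P" "parallel nabla1 P" "parallel nabla2 P"
  shows "nabla1 X (P Y) - nabla2 X (P Y) = P (nabla1 X Y - nabla2 X Y)"
  using assms unfolding parallel_def by (simp add: additive.diff)

theorem mainTheorem6:
  fixes smult :: "'r::{comm_ring_1,real_algebra_1} \<Rightarrow> 'e::real_vector \<Rightarrow> 'e"
    and pair :: "'e \<Rightarrow> 'e \<Rightarrow> 'r" and rho :: "'e \<Rightarrow> 'r \<Rightarrow> 'r"
    and dorf :: "'e \<Rightarrow> 'e \<Rightarrow> 'e" and D :: "'r \<Rightarrow> 'e"
    and I J K :: "'e \<Rightarrow> 'e"
  assumes "courant_algebroid smult pair rho dorf D"
    and "almost_hypercomplex smult pair I J K"
  shows "\<forall>nabla1 nabla2.
     (hypercomplex_connection smult pair rho D I J K nabla1 \<and>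
      parallel nabla1 I \<and> parallel nabla1 J \<and> parallel nabla1 K \<and>
      (\<forall>X Y. torsion dorf nabla1 X Y =
         I (D (pair X (I Y))) + J (D (pair X (J Y))) + K (D (pair X (K Y))))) \<and>
     (hypercomplex_connection smult pair rho D I J K nabla2 \<and>
      parallel nabla2 I \<and> parallel nabla2 J \<and> parallel nabla2 K \<and>
      (\<forall>X Y. torsion dorf nabla2 X Y =
         I (D (pair X (I Y))) + J (D (pair X (J Y))) + K (D (pair X (K Y)))))
     \<longrightarrow> nabla1 = nabla2"
proof (intro allI impI)
  fix nabla1 nabla2 :: "'e \<Rightarrow> 'e \<Rightarrow> 'e"
  assume hyps: "(hypercomplex_connection smult pair rho D I J K nabla1 \<and>
      parallel nabla1 I \<and> parallel nabla1 J \<and> parallel nabla1 K \<and>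
      (\<forall>X Y. torsion dorf nabla1 X Y =
         I (D (pair X (I Y))) + J (D (pair X (J Y))) + K (D (pair X (K Y))))) \<and>
     (hypercomplex_connection smult pair rho D I J K nabla2 \<and>
      parallel nabla2 I \<and> parallel nabla2 J \<and> parallel nabla2 K \<and>
      (\<forall>X Y. torsion dorf nabla2 X Y =
         I (D (pair X (I Y))) + J (D (pair X (J Y))) + K (D (pair X (K Y)))))"
  note quat = almost_hypercomplex_facts[OF \<open>almost_hypercomplex smult pair I J K\<close>]
  define S where "S X Y = nabla1 X Y - nabla2 X Y" for X Y
  have S_symmetric: "S X Y = S Y X" for X Y
  proof -
    have "torsion dorf nabla1 X Y = torsion dorf nabla2 X Y" using hyps by simp
    then show ?thesis unfolding S_def by (rule same_torsion_difference_symmetric)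
  qed
  have S_I: "S X (I Y) = I (S X Y)" and S_J: "S X (J Y) = J (S X Y)" for X Y
    unfolding S_def using hyps quat by (simp_all add: parallel_difference_commutes)
  have "S X Y = 0" for X Y
    using symmetric_commuting_vanishes[of S I J] S_symmetric S_I S_J quat by blast
  then show "nabla1 = nabla2" unfolding S_def by (intro ext) simp
qed

end
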